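(* Let $T:\mathbb{Z}_{\ge 0}\to\mathbb{R}$ be a sequence of real numbers. Then $T$ satisfies $$T(mn) = T(m)T(n) + T(m-1)T(n-1) \quad\text{for all integers } m,n\ge 1$$ if and only if $T$ is one of the following five sequences: (1) $T(n)=0$ for all $n\ge 0$; (2) $T(n)=\tfrac12$ for all $n\ge 0$; (3) $T(0)=0$ and $T(2n)=T(2n-1)=n$ for all $n\ge 1$; (4) $T(3n)=T(3n+2)=0$ and $T(3n+1)=1$ for all $n\ge 0$; (5) $T(n)=\tfrac12 n(n+1)$ for all $n\ge 0$. *)

theory Defs
  imports Main Complex_Main
begin

end

theory Submission
  imports Defs
begin

text \<open>
  Putting \<open>m = 1\<close> gives \<open>(1 - T 1) T n = T 0 T (n - 1)\<close>. So either \<open>T 1 \<noteq> 1\<close> and \<open>T\<close> is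
  geometric, which forces the constants \<open>0\<close> and \<open>1/2\<close>, or \<open>T 1 = 1\<close> and \<open>T 0 = 0\<close>. In the
  second case the instances \<open>(2, N)\<close>, \<open>(4, N)\<close> and \<open>(2, 2N)\<close> express \<open>T (2N)\<close> and
  \<open>T (2N - 1)\<close> through \<open>T N\<close>, \<open>T (N - 1)\<close>, \<open>T 2\<close> and \<open>T 3\<close>, so \<open>T\<close> is determined by
  \<open>x = T 2\<close> and \<open>y = T 3\<close>. Comparing different factorisations of a few small numbers
  yields three polynomial equations in \<open>x, y\<close> whose only common real solutions are
  \<open>(0, 0)\<close>, \<open>(1, 2)\<close> and \<open>(3, 6)\<close>; these are the values of the three remaining solutions.
\<close>

definition mult_recurrence :: "(nat \<Rightarrow> real) \<Rightarrow> bool" where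
  "mult_recurrence T \<longleftrightarrow>
     (\<forall>m n. m \<ge> 1 \<longrightarrow> n \<ge> 1 \<longrightarrow> T (m * n) = T m * T n + T (m - 1) * T (n - 1))"

lemma mult_recurrenceD:
  "mult_recurrence T \<Longrightarrow> 1 \<le> m \<Longrightarrow> 1 \<le> n \<Longrightarrow> T (m * n) = T m * T n + T (m - 1) * T (n - 1)"
  unfolding mult_recurrence_def by blast

definition ceil_half :: "nat \<Rightarrow> real" where
  "ceil_half n = real ((n + 1) div 2)"

definition mod3_indicator :: "nat \<Rightarrow> real" where
  "mod3_indicator n = (if n mod 3 = 1 then 1 else 0)"

definition triangular :: "nat \<Rightarrow> real" where
  "triangular n = real n * (real n + 1) / 2"

lemma mult_recurrence_const_iff: "mult_recurrence (\<lambda>_. c) \<longleftrightarrow> c = 0 \<or> c = 1 / 2"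
proof -
  have "c = c * c + c * c \<longleftrightarrow> c = 0 \<or> c = 1 / 2" by algebra
  then show ?thesis by (auto simp: mult_recurrence_def)
qed

lemma ceil_half_mult:
  fixes m n :: nat
  shows "(m * n + 1) div 2 = ((m + 1) div 2) * ((n + 1) div 2) + (m div 2) * (n div 2)"
proof -
  obtain p q where m: "m = 2 * p + m mod 2" and n: "n = 2 * q + n mod 2" and
    "m mod 2 = 0 \<or> m mod 2 = 1" "n mod 2 = 0 \<or> n mod 2 = 1"
    by (metis div_mult_mod_eq mult.commute not_mod_2_eq_0_eq_1)
  then consider "m = 2 * p" "n = 2 * q" | "m = 2 * p" "n = 2 * q + 1"
    | "m = 2 * p + 1" "n = 2 * q" | "m = 2 * p + 1" "n = 2 * q + 1"
    by auto
  then show ?thesis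
  proof cases
    case 1
    then have "m * n + 1 = 2 * (2 * p * q) + 1" by simp
    with 1 show ?thesis by simp
  next
    case 2
    then have "m * n + 1 = 2 * (p * n) + 1" by simp
    with 2 show ?thesis by (simp add: algebra_simps)
  next
    case 3
    then have "m * n + 1 = 2 * (m * q) + 1" by simp
    with 3 show ?thesis by (simp add: algebra_simps)
  next
    case 4
    then have "m * n + 1 = 2 * (2 * p * q + p + q + 1)" by (simp add: algebra_simps)
    with 4 show ?thesis by (simp add: algebra_simps)
  qed
qed

lemma mult_recurrence_ceil_half: "mult_recurrence ceil_half"
  unfolding mult_recurrence_def ceil_half_def
proof (intro allI impI)
  fix m n :: nat
  assume "1 \<le> m" "1 \<le> n"
  then have "m - 1 + 1 = m" "n - 1 + 1 = n" by auto
  then show "real ((m * n + 1) div 2) = real ((m + 1) div 2) * real ((n + 1) div 2)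
      + real ((m - 1 + 1) div 2) * real ((n - 1 + 1) div 2)"
    by (simp only: ceil_half_mult of_nat_add of_nat_mult)
qed

lemma mult_recurrence_mod3_indicator: "mult_recurrence mod3_indicator"
  unfolding mult_recurrence_def
proof (intro allI impI)
  fix m n :: nat
  assume "1 \<le> m" "1 \<le> n"
  then obtain j l where m: "m = Suc j" and n: "n = Suc l"
    by (metis Suc_pred' less_eq_Suc_le One_nat_def)
  have mn: "(m * n) mod 3 = ((m mod 3) * (n mod 3)) mod 3" by (simp add: mod_mult_eq)
  have "j mod 3 = 0 \<or> j mod 3 = 1 \<or> j mod 3 = 2" "l mod 3 = 0 \<or> l mod 3 = 1 \<or> l mod 3 = 2"
    by auto
  then show "mod3_indicator (m * n)
      = mod3_indicator m * mod3_indicator n + mod3_indicator (m - 1) * mod3_indicator (n - 1)"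
    unfolding mod3_indicator_def using mn unfolding m n
    by (elim disjE) (simp_all add: mod_Suc)
qed

lemma mult_recurrence_triangular: "mult_recurrence triangular"
  unfolding mult_recurrence_def triangular_def
proof (intro allI impI)
  fix m n :: nat
  assume "1 \<le> m" "1 \<le> n"
  then have "real (m - 1) = real m - 1" "real (n - 1) = real n - 1" by auto
  then show "real (m * n) * (real (m * n) + 1) / 2 = real m * (real m + 1) / 2 * (real n * (real n + 1) / 2)
      + real (m - 1) * (real (m - 1) + 1) / 2 * (real (n - 1) * (real (n - 1) + 1) / 2)"
    by (simp add: field_simps)
qed

lemma mult_recurrence_geometric:
  assumes T: "mult_recurrence T" and T1: "T 1 \<noteq> 1"
  shows "T n = T 0 * (T 0 / (1 - T 1)) ^ n"
proof (induction n)
  case (Suc n)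
  have "T (Suc n) = T 1 * T (Suc n) + T 0 * T n"
    using mult_recurrenceD[OF T, of 1 "Suc n"] by simp
  then have "T (Suc n) = T 0 / (1 - T 1) * T n"
    using T1 by (simp add: field_simps)
  with Suc.IH show ?case by simp
qed simp

lemma mult_recurrence_T1_ne_1:
  assumes T: "mult_recurrence T" and T1: "T 1 \<noteq> 1"
  shows "T = (\<lambda>_. 0) \<or> T = (\<lambda>_. 1 / 2)"
proof -
  define a where "a = T 0"
  define c where "c = T 0 / (1 - T 1)"
  have Tn: "T n = a * c ^ n" for n
    unfolding a_def c_def by (rule mult_recurrence_geometric[OF T T1])
  show ?thesis
  proof (cases "a = 0")
    case True
    then show ?thesis using Tn by auto
  next
    case False
    have "T 1 = T 1 * T 1 + T 0 * T 0" "T 4 = T 2 * T 2 + T 1 * T 1"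
      using mult_recurrenceD[OF T, of 1 1] mult_recurrenceD[OF T, of 2 2] by simp_all
    then have "a * c = (a * c) * (a * c) + a * a"
      and "a * c ^ 4 = (a * c^2) * (a * c^2) + (a * c) * (a * c)"
      unfolding Tn by simp_all
    with False have c: "c = a * c^2 + a" and "c ^ 4 = a * c ^ 4 + a * c^2"
      by algebra+
    then have "c ^ 3 * (c - 1) = 0" by algebra
    moreover have "c \<noteq> 0" using c False by auto
    ultimately have "c = 1" by simp
    with c have "a = 1 / 2" by simp
    then show ?thesis using Tn \<open>c = 1\<close> by auto
  qed
qed

lemma mult_recurrence_T0:
  assumes T: "mult_recurrence T" and T1: "T 1 = 1"
  shows "T 0 = 0"
  using mult_recurrenceD[OF T, of 1 1] T1 by simp

lemma mult_recurrence_double: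
  assumes T: "mult_recurrence T" and T1: "T 1 = 1" and N: "N \<ge> 1"
  shows "T (2 * N) = T 2 * T N + T (N - 1)"
  using mult_recurrenceD[OF T, of 2 N] N T1 by simp

lemma mult_recurrence_double_minus_one:
  assumes T: "mult_recurrence T" and T1: "T 1 = 1" and N: "N \<ge> 1"
  shows "T (2 * N - 1) = T N + (T 3 - T 2) * T (N - 1)"
proof -
  have "T (4 * N) = T 4 * T N + T 3 * T (N - 1)"
    using mult_recurrenceD[OF T, of 4 N] N by simp
  moreover have "T (4 * N) = T 2 * T (2 * N) + T (2 * N - 1)"
    using mult_recurrenceD[OF T, of 2 "2 * N"] N T1 by (simp add: mult.assoc)
  moreover have "T 4 = T 2 * T 2 + 1"
    using mult_recurrenceD[OF T, of 2 2] T1 by simp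
  ultimately show ?thesis
    using mult_recurrence_double[OF T T1 N] by algebra
qed

lemma mult_recurrence_unique:
  assumes T: "mult_recurrence T" and S: "mult_recurrence S"
    and "T 1 = 1" "S 1 = 1" "T 2 = S 2" "T 3 = S 3"
  shows "T n = S n"
proof (induction n rule: less_induct)
  case (less n)
  have T0: "T 0 = 0" and S0: "S 0 = 0"
    using mult_recurrence_T0 T S assms(3,4) by blast+
  have "n \<le> 3 \<or> (\<exists>N. n = 2 * N \<and> N \<ge> 2) \<or> (\<exists>N. n = 2 * N - 1 \<and> N \<ge> 2)"
    by presburger
  then consider "n \<le> 3" | N where "n = 2 * N" "N \<ge> 2" | N where "n = 2 * N - 1" "N \<ge> 2"
    by blast
  then show ?case
  proof cases
    case 1
    then have "n = 0 \<or> n = 1 \<or> n = 2 \<or> n = 3" by auto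
    then show ?thesis using assms T0 S0 by auto
  next
    case (2 N)
    then have "N < n" "N - 1 < n" by auto
    with 2 show ?thesis
      using mult_recurrence_double[OF T \<open>T 1 = 1\<close>] mult_recurrence_double[OF S \<open>S 1 = 1\<close>]
        less.IH \<open>T 2 = S 2\<close> by simp
  next
    case (3 N)
    then have "N < n" "N - 1 < n" by auto
    with 3 show ?thesis
      using mult_recurrence_double_minus_one[OF T \<open>T 1 = 1\<close>]
        mult_recurrence_double_minus_one[OF S \<open>S 1 = 1\<close>]
        less.IH \<open>T 2 = S 2\<close> \<open>T 3 = S 3\<close> by simp
  qed
qed

text \<open>
  The three relations come from the double factorisations
  \<open>18 = 2\<cdot>9 = 3\<cdot>6\<close>, \<open>20 = 2\<cdot>10 = 4\<cdot>5\<close> and \<open>32 = 2\<cdot>16 = 4\<cdot>8\<close>, after expressing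
  \<open>T 4, \<dots>, T 10\<close> and \<open>T 15, T 16\<close> through \<open>T 2\<close> and \<open>T 3\<close>
  (\<open>T 5\<close> via \<open>12 = 2\<cdot>6 = 3\<cdot>4\<close>, \<open>T 7\<close> via \<open>16 = 2\<cdot>8 = 4\<cdot>4\<close>).
\<close>

lemma mult_recurrence_small_values:
  assumes T: "mult_recurrence T" and T1: "T 1 = 1"
  defines "x \<equiv> T 2" and "y \<equiv> T 3"
  shows "y * (x^2 + 2 * x - 1) = 3 * x^3 + x"
    and "y^2 - y * (x^2 + x + 2) + x^3 + 2 * x^2 + x = 0"
    and "(x - y)^3 + y^2 - 2 * y + x = 0"
proof -
  have eq: "\<And>m n. 1 \<le> m \<Longrightarrow> 1 \<le> n \<Longrightarrow> T (m * n) = T m * T n + T (m - 1) * T (n - 1)"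
    using mult_recurrenceD[OF T] by blast
  have T4: "T 4 = x^2 + 1"
    using eq[of 2 2] T1 unfolding x_def by (simp add: power2_eq_square)
  have T6: "T 6 = x * y + x"
    using eq[of 2 3] T1 unfolding x_def y_def by simp
  have T8: "T 8 = x^3 + x + y"
    using eq[of 2 4] T4 T1 unfolding x_def y_def by (simp add: algebra_simps power3_eq_cube power2_eq_square)
  have T9: "T 9 = y^2 + x^2"
    using eq[of 3 3] unfolding x_def y_def by (simp add: power2_eq_square)
  have T5: "T 5 = y + x * y - x^2"
    using eq[of 2 6] eq[of 3 4] T4 T6 T1 unfolding x_def y_def
    by (simp add: algebra_simps power2_eq_square)
  have T10: "T 10 = x * T 5 + T 4"
    using eq[of 2 5] T1 unfolding x_def by simp
  have T16: "T 16 = T 4 * T 4 + y * y"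
    using eq[of 4 4] unfolding y_def by simp
  have T7: "T 7 = T 4 * T 4 + y * y - x * T 8"
    using eq[of 2 8] T16 T1 unfolding x_def by simp
  have T15: "T 15 = y * T 5 + x * T 4"
    using eq[of 3 5] unfolding x_def y_def by simp
  have "x * T 9 + T 8 = y * T 6 + x * T 5"
    using eq[of 2 9] eq[of 3 6] T1 unfolding x_def y_def by simp
  then show "y * (x^2 + 2 * x - 1) = 3 * x^3 + x"
    unfolding T9 T8 T6 T5 by algebra
  have "x * T 10 + T 9 = T 4 * T 5 + y * T 4"
    using eq[of 2 10] eq[of 4 5] T1 unfolding x_def y_def by simp
  then show "y^2 - y * (x^2 + x + 2) + x^3 + 2 * x^2 + x = 0"
    unfolding T10 T9 T4 T5 by algebra
  have "x * T 16 + T 15 = T 4 * T 8 + y * T 7"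
    using eq[of 2 16] eq[of 4 8] T1 unfolding x_def y_def by simp
  then show "(x - y)^3 + y^2 - 2 * y + x = 0"
    unfolding T16 T15 T4 T5 T7 T8 by algebra
qed

lemma small_values_solutions:
  fixes x y :: real
  assumes L: "y * (x^2 + 2 * x - 1) = 3 * x^3 + x"
    and Q: "y^2 - y * (x^2 + x + 2) + x^3 + 2 * x^2 + x = 0"
    and C: "(x - y)^3 + y^2 - 2 * y + x = 0"
  shows "(x = 0 \<and> y = 0) \<or> (x = 1 \<and> y = 2) \<or> (x = 3 \<and> y = 6)"
proof -
  have res: "x * (x - 1) * (x - 3) * (x + 1) * (2 * x^3 + x - 1) = 0"
    using L Q by algebra
  have "2 * x^3 + x - 1 \<noteq> 0"
  proof
    assume "2 * x^3 + x - 1 = 0"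
    with L C show False by algebra
  qed
  with res have "x = 0 \<or> x = 1 \<or> x = 3 \<or> x = -1" by auto
  then show ?thesis
  proof (elim disjE)
    assume "x = -1"
    with L C show ?thesis by auto
  qed (use L in auto)
qed

lemma mult_recurrence_T1_eq_1:
  assumes T: "mult_recurrence T" and T1: "T 1 = 1"
  shows "T = ceil_half \<or> T = mod3_indicator \<or> T = triangular"
proof -
  have "(T 2 = 0 \<and> T 3 = 0) \<or> (T 2 = 1 \<and> T 3 = 2) \<or> (T 2 = 3 \<and> T 3 = 6)"
    using small_values_solutions[OF mult_recurrence_small_values[OF T T1]] .
  moreover have "T = S" if "mult_recurrence S" "S 1 = 1" "T 2 = S 2" "T 3 = S 3" for S
    using mult_recurrence_unique[OF T that(1) T1 that(2-4)] by blast
  ultimately show ?thesis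
    using mult_recurrence_ceil_half mult_recurrence_mod3_indicator mult_recurrence_triangular
    by (auto simp: ceil_half_def mod3_indicator_def triangular_def)
qed

lemma mult_recurrence_iff:
  "mult_recurrence T \<longleftrightarrow>
     T = (\<lambda>_. 0) \<or> T = (\<lambda>_. 1 / 2) \<or> T = ceil_half \<or> T = mod3_indicator \<or> T = triangular"
  using mult_recurrence_T1_ne_1 mult_recurrence_T1_eq_1 mult_recurrence_const_iff[of 0]
    mult_recurrence_const_iff[of "1 / 2"] mult_recurrence_ceil_half
    mult_recurrence_mod3_indicator mult_recurrence_triangular
  by blast

lemma ceil_half_iff:
  "T = ceil_half \<longleftrightarrow> T 0 = 0 \<and> (\<forall>n. n \<ge> 1 \<longrightarrow> T (2 * n) = real n \<and> T (2 * n - 1) = real n)"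
proof
  assume "T = ceil_half"
  then show "T 0 = 0 \<and> (\<forall>n. n \<ge> 1 \<longrightarrow> T (2 * n) = real n \<and> T (2 * n - 1) = real n)"
    by (auto simp: ceil_half_def)
next
  assume T: "T 0 = 0 \<and> (\<forall>n. n \<ge> 1 \<longrightarrow> T (2 * n) = real n \<and> T (2 * n - 1) = real n)"
  show "T = ceil_half"
  proof
    fix n :: nat
    have "n = 0 \<or> (\<exists>k\<ge>1. n = 2 * k) \<or> (\<exists>k\<ge>1. n = 2 * k - 1)"
      by presburger
    then consider "n = 0" | k where "n = 2 * k" "k \<ge> 1" | k where "n = 2 * k - 1" "k \<ge> 1"
      by blast
    then show "T n = ceil_half n"
      by cases (use T in \<open>auto simp: ceil_half_def\<close>)
  qed
qed

lemma mod3_indicator_iff: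
  "T = mod3_indicator \<longleftrightarrow> (\<forall>n. T (3 * n) = 0 \<and> T (3 * n + 2) = 0 \<and> T (3 * n + 1) = 1)"
proof
  assume "T = mod3_indicator"
  then show "\<forall>n. T (3 * n) = 0 \<and> T (3 * n + 2) = 0 \<and> T (3 * n + 1) = 1"
    by (simp add: mod3_indicator_def mod_Suc)
next
  assume T: "\<forall>n. T (3 * n) = 0 \<and> T (3 * n + 2) = 0 \<and> T (3 * n + 1) = 1"
  show "T = mod3_indicator"
  proof
    fix n :: nat
    have "n = 3 * (n div 3) + n mod 3" by simp
    moreover have "n mod 3 = 0 \<or> n mod 3 = 1 \<or> n mod 3 = 2" by auto
    ultimately show "T n = mod3_indicator n"
      using T unfolding mod3_indicator_def by (metis add.right_neutral one_neq_zero)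
  qed
qed

theorem theorem1:
  fixes T :: "nat \<Rightarrow> real"
  shows "(\<forall>m n. m \<ge> 1 \<longrightarrow> n \<ge> 1 \<longrightarrow> T (m * n) = T m * T n + T (m - 1) * T (n - 1))
    \<longleftrightarrow>
    ((\<forall>n. T n = 0)
     \<or> (\<forall>n. T n = 1 / 2)
     \<or> (T 0 = 0 \<and> (\<forall>n. n \<ge> 1 \<longrightarrow> T (2 * n) = real n \<and> T (2 * n - 1) = real n))
     \<or> (\<forall>n. T (3 * n) = 0 \<and> T (3 * n + 2) = 0 \<and> T (3 * n + 1) = 1)
     \<or> (\<forall>n. T n = real n * (real n + 1) / 2))"
proof -
  have "T = (\<lambda>_. c) \<longleftrightarrow> (\<forall>n. T n = c)" for c by auto
  moreover have "T = triangular \<longleftrightarrow> (\<forall>n. T n = real n * (real n + 1) / 2)"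
    by (auto simp: triangular_def)
  ultimately show ?thesis
    using mult_recurrence_iff[of T] ceil_half_iff[of T] mod3_indicator_iff[of T]
    unfolding mult_recurrence_def by presburger
qed

end
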